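(* Let $(S,\sigma)$ be an enriched permutation of $\mathbb{Z}_{>0}$ (that is, $S\subseteq\mathbb{Z}_{>0}$ is a finite subset and $\sigma$ is a permutation of $S$). Then $R(I_S)\leq R(\sigma)$, with equality if and only if $\sigma=I_S$, where $I_S$ denotes the identity permutation of $S$.
   Context: Let $p$ be a prime and fix $y\in\mathbb{Z}_p$ which is not a positive integer, with $p$-adic expansion $y=\sum_{n\geq 0} y_n p^n$, $0\leq y_n<p$. For an integer $n\geq 1$ define $d(n)=p^w$, where $w$ is the unique integer with $\sum_{j=0}^{w-1} y_j < n \leq \sum_{j=0}^{w} y_j$; for $n<1$ set $d(n)=0$. For $m\in\mathbb{Z}$ set $y(m)=\sum_{n=1}^{m} d(n)$ (equal to $0$ when $m<1$). For $k_1,k_2\in\mathbb{Z}_{>0}$ define $R(k_1,k_2)=y(pk_1-k_2)$, and for an enriched permutation $(S,\sigma)$ of $\mathbb{Z}_{>0}$ define $R(\sigma)=\sum_{k\in S}R(k,\sigma(k))$. *)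

theory Defs
  imports "HOL-Combinatorics.Permutations" "HOL-Computational_Algebra.Primes"
begin

text \<open>The p-adic integer y is represented by its digit sequence ydig (y = sum ydig n * p^n).\<close>

definition dfun :: "nat \<Rightarrow> (nat \<Rightarrow> nat) \<Rightarrow> int \<Rightarrow> nat" where
  "dfun p ydig n = (if n < 1 then 0 else
     p ^ (THE w. int (\<Sum>j<w. ydig j) < n \<and> n \<le> int (\<Sum>j\<le>w. ydig j)))"

definition yfun :: "nat \<Rightarrow> (nat \<Rightarrow> nat) \<Rightarrow> int \<Rightarrow> nat" where
  "yfun p ydig m = (\<Sum>n\<in>{1..m}. dfun p ydig n)"

definition Rpair :: "nat \<Rightarrow> (nat \<Rightarrow> nat) \<Rightarrow> nat \<Rightarrow> nat \<Rightarrow> nat" where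
  "Rpair p ydig k1 k2 = yfun p ydig (int p * int k1 - int k2)"

definition Rperm :: "nat \<Rightarrow> (nat \<Rightarrow> nat) \<Rightarrow> nat set \<Rightarrow> (nat \<Rightarrow> nat) \<Rightarrow> nat" where
  "Rperm p ydig S \<sigma> = (\<Sum>k\<in>S. Rpair p ydig k (\<sigma> k))"

end

theory Submission
  imports Defs
begin

text \<open>
  The increments d(n) = y(n) - y(n-1) are nondecreasing, and since every digit is below p they
  strictly increase across any p consecutive steps. So y has increasing differences, which gives
  the exchange inequality R(j,a) + R(m,m) < R(j,m) + R(m,a) whenever j, a < m. If \<sigma> \<noteq> id, let m
  be its largest moved point, with a = \<sigma>(m) and \<sigma>(j) = m; composing \<sigma> with the transposition
  of m and a fixes m, moves fewer points, and by the exchange inequality strictly decreases R.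
\<close>

lemma permutes_transpose_max_moved:
  fixes \<sigma> :: "nat \<Rightarrow> nat"
  assumes perm: "\<sigma> permutes S" and "finite S" and "\<sigma> \<noteq> id"
  obtains j m where "j \<in> S" "m \<in> S" "j < m" "\<sigma> j = m" "\<sigma> m < m"
    and "transpose m (\<sigma> m) \<circ> \<sigma> permutes S"
    and "card {k. (transpose m (\<sigma> m) \<circ> \<sigma>) k \<noteq> k} < card {k. \<sigma> k \<noteq> k}"
proof -
  define M where "M = {k. \<sigma> k \<noteq> k}"
  have "M \<subseteq> S" unfolding M_def using perm permutes_not_in by fastforce
  then have "finite M" using \<open>finite S\<close> finite_subset by blast
  have "M \<noteq> {}" unfolding M_def using \<open>\<sigma> \<noteq> id\<close> by auto
  define m where "m = Max M"
  have "m \<in> M" and m_max: "\<And>k. k \<in> M \<Longrightarrow> k \<le> m"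
    unfolding m_def using \<open>finite M\<close> \<open>M \<noteq> {}\<close> by simp_all
  have inj: "inj \<sigma>" using perm by (rule permutes_inj)
  define a where "a = \<sigma> m"
  define j where "j = inv \<sigma> m"
  have "m \<in> S" using \<open>m \<in> M\<close> \<open>M \<subseteq> S\<close> by blast
  have "a \<in> S" unfolding a_def using perm \<open>m \<in> S\<close> by (simp add: permutes_in_image)
  have "\<sigma> j = m" unfolding j_def using perm by (rule permutes_inverses(1))
  have "j \<in> S" using perm \<open>m \<in> S\<close> \<open>\<sigma> j = m\<close> by (metis permutes_in_image)
  have "a \<noteq> m" "j \<noteq> m" using \<open>m \<in> M\<close> \<open>\<sigma> j = m\<close> unfolding a_def M_def by auto
  \<comment> \<open>Both neighbours of the largest moved point are moved points as well, hence smaller.\<close>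
  have "a \<in> M" using \<open>a \<noteq> m\<close> inj unfolding a_def M_def by (auto dest: injD)
  have "j \<in> M" using \<open>j \<noteq> m\<close> \<open>\<sigma> j = m\<close> unfolding M_def by simp
  have "a < m" "j < m" using m_max \<open>a \<in> M\<close> \<open>j \<in> M\<close> \<open>a \<noteq> m\<close> \<open>j \<noteq> m\<close> by force+
  define \<tau> where "\<tau> = transpose m a \<circ> \<sigma>"
  have "\<tau> permutes S" unfolding \<tau>_def
    using permutes_compose[OF perm permutes_swap_id[OF \<open>m \<in> S\<close> \<open>a \<in> S\<close>]] .
  have "{k. \<tau> k \<noteq> k} \<subseteq> M - {m}"
    using inj \<open>\<sigma> j = m\<close> \<open>j \<in> M\<close> unfolding \<tau>_def M_def a_def
    by (auto simp: transpose_def dest: injD)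
  then have "card {k. \<tau> k \<noteq> k} < card M"
    using \<open>finite M\<close> \<open>m \<in> M\<close> by (meson card_Diff1_less card_mono finite_Diff le_less_trans)
  then show ?thesis
    using that \<open>j \<in> S\<close> \<open>m \<in> S\<close> \<open>j < m\<close> \<open>\<sigma> j = m\<close> \<open>a < m\<close> \<open>\<tau> permutes S\<close>
    unfolding \<tau>_def a_def M_def by blast
qed

lemma sum_diagonal_less_sum_permuted:
  fixes f :: "nat \<Rightarrow> nat \<Rightarrow> 'a::ordered_cancel_comm_monoid_add"
  assumes exchange: "\<And>j a m. j \<in> S \<Longrightarrow> a \<in> S \<Longrightarrow> m \<in> S \<Longrightarrow> j < m \<Longrightarrow> a < m \<Longrightarrow>
      f j a + f m m < f j m + f m a"
    and "finite S" and "\<sigma> permutes S" and "\<sigma> \<noteq> id"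
  shows "(\<Sum>k\<in>S. f k k) < (\<Sum>k\<in>S. f k (\<sigma> k))"
  using assms(3,4)
proof (induction "card {k. \<sigma> k \<noteq> k}" arbitrary: \<sigma> rule: less_induct)
  case less
  obtain j m where "j \<in> S" "m \<in> S" "j < m" "\<sigma> j = m" "\<sigma> m < m"
    and \<tau>_perm: "transpose m (\<sigma> m) \<circ> \<sigma> permutes S"
    and \<tau>_card: "card {k. (transpose m (\<sigma> m) \<circ> \<sigma>) k \<noteq> k} < card {k. \<sigma> k \<noteq> k}"
    using permutes_transpose_max_moved[OF less.prems(1) \<open>finite S\<close> less.prems(2)] .
  define \<tau> where "\<tau> = transpose m (\<sigma> m) \<circ> \<sigma>"
  have inj: "inj \<sigma>" using less.prems(1) by (rule permutes_inj)
  have "\<tau> j = \<sigma> m" "\<tau> m = m" using \<open>\<sigma> j = m\<close> unfolding \<tau>_def by simp_all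
  have \<tau>_other: "\<tau> k = \<sigma> k" if "k \<noteq> j" "k \<noteq> m" for k
    using that inj \<open>\<sigma> j = m\<close> unfolding \<tau>_def by (auto simp: transpose_def dest: injD)
  have split: "(\<Sum>k\<in>S. g k) = g j + g m + (\<Sum>k\<in>S - {j, m}. g k)" for g :: "nat \<Rightarrow> 'a"
  proof -
    have "S = insert j (insert m (S - {j, m}))" using \<open>j \<in> S\<close> \<open>m \<in> S\<close> by auto
    then have "(\<Sum>k\<in>S. g k) = (\<Sum>k\<in>insert j (insert m (S - {j, m})). g k)" by simp
    also have "\<dots> = g j + g m + (\<Sum>k\<in>S - {j, m}. g k)"
      using \<open>finite S\<close> \<open>j < m\<close> by (simp add: add.assoc)
    finally show ?thesis .
  qed
  have "(\<Sum>k\<in>S. f k (\<tau> k)) < (\<Sum>k\<in>S. f k (\<sigma> k))"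
  proof -
    have "f j (\<tau> j) + f m (\<tau> m) < f j (\<sigma> j) + f m (\<sigma> m)"
      using exchange \<open>j \<in> S\<close> \<open>m \<in> S\<close> \<open>j < m\<close> \<open>\<sigma> m < m\<close> less.prems(1)
      unfolding \<open>\<tau> j = \<sigma> m\<close> \<open>\<tau> m = m\<close> \<open>\<sigma> j = m\<close> by (simp add: permutes_in_image)
    moreover have "(\<Sum>k\<in>S - {j, m}. f k (\<tau> k)) = (\<Sum>k\<in>S - {j, m}. f k (\<sigma> k))"
      by (rule sum.cong) (simp_all add: \<tau>_other)
    ultimately show ?thesis unfolding split[of "\<lambda>k. f k (\<tau> k)"] split[of "\<lambda>k. f k (\<sigma> k)"]
      by (simp add: add_less_le_mono)
  qed
  moreover have "(\<Sum>k\<in>S. f k k) \<le> (\<Sum>k\<in>S. f k (\<tau> k))"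
  proof (cases "\<tau> = id")
    case False
    then show ?thesis using less.hyps[OF _ \<tau>_perm] \<tau>_card unfolding \<tau>_def by fastforce
  qed simp
  ultimately show ?case by (metis le_less_trans)
qed

locale padic_digits =
  fixes p :: nat and ydig :: "nat \<Rightarrow> nat"
  assumes one_less_p: "1 < p"
    and digit_less: "ydig n < p"
    and infinite_support: "infinite {n. ydig n \<noteq> 0}"
begin

definition level :: "int \<Rightarrow> nat" where
  "level n = (THE w. int (\<Sum>j<w. ydig j) < n \<and> n \<le> int (\<Sum>j\<le>w. ydig j))"

lemma digit_sum_atMost_le_lessThan: "w < v \<Longrightarrow> (\<Sum>j\<le>w. ydig j) \<le> (\<Sum>j<v. ydig j)"
  by (rule sum_mono2) auto

lemma digit_sum_unbounded: "\<exists>w. N \<le> (\<Sum>j\<le>w. ydig j)"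
proof -
  obtain F where F: "F \<subseteq> {n. ydig n \<noteq> 0}" "finite F" "card F = N"
    using infinite_arbitrarily_large[OF infinite_support] by blast
  have "N = (\<Sum>j\<in>F. 1)" using F by simp
  also have "\<dots> \<le> (\<Sum>j\<in>F. ydig j)" by (rule sum_mono) (use F in auto)
  also have "\<dots> \<le> (\<Sum>j\<le>Max F. ydig j)" by (rule sum_mono2) (use F in auto)
  finally show ?thesis by blast
qed

lemma level_unique:
  assumes "int (\<Sum>j<w. ydig j) < n" "n \<le> int (\<Sum>j\<le>w. ydig j)"
  shows "level n = w"
  unfolding level_def
proof (rule the_equality)
  fix v assume v: "int (\<Sum>j<v. ydig j) < n \<and> n \<le> int (\<Sum>j\<le>v. ydig j)"
  show "v = w"
  proof (rule linorder_cases)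
    assume "v < w"
    then show ?thesis using digit_sum_atMost_le_lessThan[of v w] v assms by linarith
  next
    assume "w < v"
    then show ?thesis using digit_sum_atMost_le_lessThan[of w v] v assms by linarith
  qed
qed (use assms in simp)

lemma level_bounds:
  assumes "1 \<le> n"
  shows "int (\<Sum>j<level n. ydig j) < n" "n \<le> int (\<Sum>j\<le>level n. ydig j)"
proof -
  define w where "w = (LEAST w. nat n \<le> (\<Sum>j\<le>w. ydig j))"
  have upper: "nat n \<le> (\<Sum>j\<le>w. ydig j)"
    unfolding w_def using digit_sum_unbounded by (rule LeastI_ex)
  have lower: "(\<Sum>j<w. ydig j) < nat n"
  proof (cases w)
    case (Suc v)
    then have "\<not> nat n \<le> (\<Sum>j\<le>v. ydig j)" unfolding w_def by (metis lessI not_less_Least)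
    then show ?thesis using Suc by (simp add: lessThan_Suc_atMost)
  qed (use assms in simp)
  have "level n = w" using upper lower assms by (intro level_unique) (auto simp del: of_nat_sum)
  then show "int (\<Sum>j<level n. ydig j) < n" "n \<le> int (\<Sum>j\<le>level n. ydig j)"
    using upper lower assms by (auto simp del: of_nat_sum)
qed

lemma level_mono:
  assumes "1 \<le> n1" "n1 \<le> n2"
  shows "level n1 \<le> level n2"
proof (rule ccontr)
  assume "\<not> level n1 \<le> level n2"
  then show False
    using digit_sum_atMost_le_lessThan[of "level n2" "level n1"]
      level_bounds[of n1] level_bounds[of n2] assms by linarith
qed

text \<open>A level consists of ydig w < p consecutive integers, so a jump by p leaves it.\<close>
lemma level_strict_mono:
  assumes "1 \<le> n1" "n1 + int p \<le> n2"
  shows "level n1 < level n2"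
proof -
  have "level n1 \<le> level n2" using assms one_less_p by (intro level_mono) auto
  moreover have "level n1 \<noteq> level n2"
  proof
    assume same: "level n1 = level n2"
    have "int (\<Sum>j\<le>level n1. ydig j) = int (\<Sum>j<level n1. ydig j) + int (ydig (level n1))"
      by (simp add: lessThan_Suc_atMost[symmetric] del: of_nat_sum)
    then show False
      using level_bounds[of n1] level_bounds[of n2, folded same] digit_less[of "level n1"] assms
      by linarith
  qed
  ultimately show ?thesis by simp
qed

lemma dfun_eq: "dfun p ydig n = (if n < 1 then 0 else p ^ level n)"
  unfolding dfun_def level_def ..

lemma dfun_mono: "n1 \<le> n2 \<Longrightarrow> dfun p ydig n1 \<le> dfun p ydig n2"
  using level_mono[of n1 n2] one_less_p by (simp add: dfun_eq power_increasing)

lemma dfun_strict_mono: "1 \<le> n2 \<Longrightarrow> n1 + int p \<le> n2 \<Longrightarrow> dfun p ydig n1 < dfun p ydig n2"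
  using level_strict_mono[of n1 n2] one_less_p by (simp add: dfun_eq power_strict_increasing)

lemma yfun_eq_yfun_pred_plus_dfun: "yfun p ydig m = yfun p ydig (m - 1) + dfun p ydig m"
proof (cases "1 \<le> m")
  case True
  then have "{1..m} = insert m {1..m - 1}" by auto
  then show ?thesis unfolding yfun_def by simp
qed (simp add: yfun_def dfun_eq)

lemma yfun_increment_mono:
  assumes "u1 \<le> u2"
  shows "yfun p ydig (u1 + int t) + yfun p ydig u2 \<le> yfun p ydig (u2 + int t) + yfun p ydig u1"
proof (induction t)
  case (Suc t)
  have "dfun p ydig (u1 + int (Suc t)) \<le> dfun p ydig (u2 + int (Suc t))"
    using assms by (intro dfun_mono) simp
  then show ?case
    using Suc.IH yfun_eq_yfun_pred_plus_dfun[of "u1 + int (Suc t)"]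
      yfun_eq_yfun_pred_plus_dfun[of "u2 + int (Suc t)"] by simp
qed simp

lemma yfun_increment_strict_mono:
  assumes "u1 + int p \<le> u2" "0 \<le> u2" "0 < t"
  shows "yfun p ydig (u1 + int t) + yfun p ydig u2 < yfun p ydig (u2 + int t) + yfun p ydig u1"
proof -
  obtain s where "t = Suc s" using \<open>0 < t\<close> gr0_implies_Suc by blast
  have "yfun p ydig (u1 + int s) + yfun p ydig u2 \<le> yfun p ydig (u2 + int s) + yfun p ydig u1"
    using assms by (intro yfun_increment_mono) simp
  moreover have "dfun p ydig (u1 + int t) < dfun p ydig (u2 + int t)"
    using assms by (intro dfun_strict_mono) simp_all
  ultimately show ?thesis
    using yfun_eq_yfun_pred_plus_dfun[of "u1 + int t"] yfun_eq_yfun_pred_plus_dfun[of "u2 + int t"]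
    unfolding \<open>t = Suc s\<close> by simp
qed

lemma Rpair_exchange:
  assumes "j < m" "a < m"
  shows "Rpair p ydig j a + Rpair p ydig m m < Rpair p ydig j m + Rpair p ydig m a"
proof -
  define u1 u2 where "u1 = int p * int j - int m" and "u2 = int p * int m - int m"
  have "int p * (int j + 1) \<le> int p * int m" using \<open>j < m\<close> by (intro mult_left_mono) auto
  then have "u1 + int p \<le> u2" unfolding u1_def u2_def by (simp add: algebra_simps)
  have "1 * int m \<le> int p * int m" using one_less_p by (intro mult_right_mono) simp_all
  then have "0 \<le> u2" unfolding u2_def by simp
  have "yfun p ydig (u1 + int (m - a)) + yfun p ydig u2 < yfun p ydig (u2 + int (m - a)) + yfun p ydig u1"
    using \<open>u1 + int p \<le> u2\<close> \<open>0 \<le> u2\<close> \<open>a < m\<close> by (intro yfun_increment_strict_mono) simp_all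
  then show ?thesis
    unfolding Rpair_def u1_def u2_def using \<open>a < m\<close> by (simp add: of_nat_diff)
qed

lemma Rperm_id_less:
  assumes "finite S" "\<sigma> permutes S" "\<sigma> \<noteq> id"
  shows "Rperm p ydig S id < Rperm p ydig S \<sigma>"
  using sum_diagonal_less_sum_permuted[of S "Rpair p ydig", OF Rpair_exchange assms]
  by (simp add: Rperm_def)

end

theorem proposition5p7:
  fixes p :: nat and ydig :: "nat \<Rightarrow> nat" and S :: "nat set" and \<sigma> :: "nat \<Rightarrow> nat"
  assumes "prime p"
    and "\<forall>n. ydig n < p"
    and "infinite {n. ydig n \<noteq> 0}"
    and "finite S" and "0 \<notin> S"
    and "\<sigma> permutes S"
  shows "Rperm p ydig S id \<le> Rperm p ydig S \<sigma> \<and> (Rperm p ydig S \<sigma> = Rperm p ydig S id \<longleftrightarrow> \<sigma> = id)"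
proof -
  interpret padic_digits p ydig
    using assms(1-3) prime_gt_1_nat by unfold_locales simp_all
  show ?thesis
  proof (cases "\<sigma> = id")
    case False
    then show ?thesis using Rperm_id_less[OF assms(4,6) False] by simp
  qed simp
qed

end
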